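(* Let $P$ and $Q$ be finite posets and let $f : P \to Q$ be a $\chi$-distinguished map. Then for every function $h : Q \to \mathbb{Z}$, \[ \int_{Q} h \, d\chi = \int_{P} (f^* h) \, d\chi , \] where $f^*h = h \circ f$.
   Context: For a finite poset $P$, the zeta function is the $P \times P$ matrix with $\zeta(x,y)=1$ if $x \le y$ and $0$ otherwise; it is invertible, and the Euler characteristic is $\chi(P) = \sum_{x,y} \zeta^{-1}(x,y)$ ($\chi(\emptyset)=0$). A filter is an upward-closed subset; $\delta_S$ is the indicator function of $S$. Every $g : P \to \mathbb{Z}$ can be written as $g = \sum_i a_i \delta_{S_i}$ with $a_i \in \mathbb{Z}$ and $S_i$ filters of $P$; the Euler calculus is $\int_P g\, d\chi = \sum_i a_i \chi(S_i)$, independent of the representation. An order-preserving map $f : P \to Q$ is $\chi$-distinguished if $\chi(f^{-1}(Q_{\ge x})) = 1$ for every $x \in Q$, where $Q_{\ge x} = \{y \in Q \mid y \ge x\}$ (with $f^{-1}(Q_{\ge x})$ given the order induced from $P$). *)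

theory Defs
  imports Main
begin

definition finite_poset :: "'a set \<Rightarrow> ('a \<Rightarrow> 'a \<Rightarrow> bool) \<Rightarrow> bool" where
  "finite_poset P le \<longleftrightarrow> finite P
     \<and> (\<forall>x\<in>P. le x x)
     \<and> (\<forall>x\<in>P. \<forall>y\<in>P. le x y \<and> le y x \<longrightarrow> x = y)
     \<and> (\<forall>x\<in>P. \<forall>y\<in>P. \<forall>z\<in>P. le x y \<and> le y z \<longrightarrow> le x z)"

definition zeta :: "'a set \<Rightarrow> ('a \<Rightarrow> 'a \<Rightarrow> bool) \<Rightarrow> 'a \<Rightarrow> 'a \<Rightarrow> int" where
  "zeta P le x y = (if x \<in> P \<and> y \<in> P \<and> le x y then 1 else 0)"

definition zeta_inv :: "'a set \<Rightarrow> ('a \<Rightarrow> 'a \<Rightarrow> bool) \<Rightarrow> 'a \<Rightarrow> 'a \<Rightarrow> int" where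
  "zeta_inv P le = (THE m.
      (\<forall>x\<in>P. \<forall>y\<in>P. (\<Sum>z\<in>P. zeta P le x z * m z y) = (if x = y then 1 else 0))
    \<and> (\<forall>x\<in>P. \<forall>y\<in>P. (\<Sum>z\<in>P. m x z * zeta P le z y) = (if x = y then 1 else 0))
    \<and> (\<forall>x y. x \<notin> P \<or> y \<notin> P \<longrightarrow> m x y = 0))"

definition euler_char :: "'a set \<Rightarrow> ('a \<Rightarrow> 'a \<Rightarrow> bool) \<Rightarrow> int" where
  "euler_char S le = (\<Sum>x\<in>S. \<Sum>y\<in>S. zeta_inv S le x y)"

definition is_filter :: "'a set \<Rightarrow> ('a \<Rightarrow> 'a \<Rightarrow> bool) \<Rightarrow> 'a set \<Rightarrow> bool" where
  "is_filter P le S \<longleftrightarrow> S \<subseteq> P \<and> (\<forall>x\<in>S. \<forall>y\<in>P. le x y \<longrightarrow> y \<in> S)"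

definition filter_rep :: "'a set \<Rightarrow> ('a \<Rightarrow> 'a \<Rightarrow> bool) \<Rightarrow> ('a \<Rightarrow> int) \<Rightarrow> (int \<times> 'a set) list \<Rightarrow> bool" where
  "filter_rep P le g rep \<longleftrightarrow>
     (\<forall>(a, S)\<in>set rep. is_filter P le S)
   \<and> (\<forall>x\<in>P. g x = (\<Sum>(a, S)\<leftarrow>rep. a * (if x \<in> S then 1 else 0)))"

text \<open>Euler calculus: the value sum a_i chi(S_i) of some filter representation
  (well-defined, i.e. independent of the representation).\<close>
definition euler_integral :: "'a set \<Rightarrow> ('a \<Rightarrow> 'a \<Rightarrow> bool) \<Rightarrow> ('a \<Rightarrow> int) \<Rightarrow> int" where
  "euler_integral P le g = (THE c. \<exists>rep. filter_rep P le g rep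
       \<and> c = (\<Sum>(a, S)\<leftarrow>rep. a * euler_char S le))"

definition order_preserving :: "'a set \<Rightarrow> ('a \<Rightarrow> 'a \<Rightarrow> bool) \<Rightarrow> 'b set \<Rightarrow> ('b \<Rightarrow> 'b \<Rightarrow> bool) \<Rightarrow> ('a \<Rightarrow> 'b) \<Rightarrow> bool" where
  "order_preserving P leP Q leQ f \<longleftrightarrow> f ` P \<subseteq> Q \<and> (\<forall>x\<in>P. \<forall>y\<in>P. leP x y \<longrightarrow> leQ (f x) (f y))"

definition chi_distinguished :: "'a set \<Rightarrow> ('a \<Rightarrow> 'a \<Rightarrow> bool) \<Rightarrow> 'b set \<Rightarrow> ('b \<Rightarrow> 'b \<Rightarrow> bool) \<Rightarrow> ('a \<Rightarrow> 'b) \<Rightarrow> bool" where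
  "chi_distinguished P leP Q leQ f \<longleftrightarrow> order_preserving P leP Q leQ f
     \<and> (\<forall>x\<in>Q. euler_char {p \<in> P. leQ x (f p)} leP = 1)"

end

theory Submission
  imports Defs
begin

text \<open>The Euler integral is governed by the weighting of a finite poset, the row sums of its
  Moebius function \<open>\<mu> = \<zeta>\<inverse>\<close>: since the Moebius function of a filter is the restriction of
  that of P, the Euler characteristic of a filter is the total weight of its elements, so
  integrating g amounts to summing g against the weighting. The weighting of Q is the unique
  w with \<open>\<Sum>\<^bsub>x \<ge> q\<^esub> w x = 1\<close> for all q. Pushing the weighting of P forward along f gives a
  function whose sum over \<open>Q\<^bsub>\<ge>q\<^esub>\<close> is \<open>\<chi>(f\<inverse>(Q\<^bsub>\<ge>q\<^esub>)) = 1\<close>, so for a \<open>\<chi>\<close>-distinguished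
  map it is the weighting of Q, and the two integrals agree.\<close>

definition right_inverse_on :: "'a set \<Rightarrow> ('a \<Rightarrow> 'a \<Rightarrow> 'r::semiring_1) \<Rightarrow> ('a \<Rightarrow> 'a \<Rightarrow> 'r) \<Rightarrow> bool" where
  "right_inverse_on P a b \<longleftrightarrow> (\<forall>x\<in>P. \<forall>y\<in>P. (\<Sum>z\<in>P. a x z * b z y) = (if x = y then 1 else 0))"

lemma left_right_inverse_eq:
  assumes "finite P" and l: "right_inverse_on P l a" and r: "right_inverse_on P a r"
    and "x \<in> P" "y \<in> P"
  shows "l x y = r x y"
proof -
  have "l x y = (\<Sum>z\<in>P. l x z * (if z = y then 1 else 0))"
    using assms(1,5) by (simp add: if_distrib[where f="\<lambda>c. _ * c"] cong: if_cong)
  also have "\<dots> = (\<Sum>z\<in>P. l x z * (\<Sum>w\<in>P. a z w * r w y))"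
    using r assms(5) unfolding right_inverse_on_def by (intro sum.cong) auto
  also have "\<dots> = (\<Sum>w\<in>P. (\<Sum>z\<in>P. l x z * a z w) * r w y)"
    by (simp only: sum_distrib_left sum_distrib_right mult.assoc) (rule sum.swap)
  also have "\<dots> = (\<Sum>w\<in>P. (if x = w then 1 else 0) * r w y)"
    using l assms(4) unfolding right_inverse_on_def by (intro sum.cong) auto
  also have "\<dots> = r x y"
    using assms(1,4) by (simp add: if_distrib[where f="\<lambda>c. c * _"] cong: if_cong)
  finally show ?thesis .
qed

lemma finite_poset_finite: "finite_poset P le \<Longrightarrow> finite P"
  unfolding finite_poset_def by simp

lemma finite_poset_refl: "finite_poset P le \<Longrightarrow> x \<in> P \<Longrightarrow> le x x"
  unfolding finite_poset_def by simp

lemma finite_poset_antisym: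
  "finite_poset P le \<Longrightarrow> x \<in> P \<Longrightarrow> y \<in> P \<Longrightarrow> le x y \<Longrightarrow> le y x \<Longrightarrow> x = y"
  unfolding finite_poset_def by (elim conjE) blast

lemma finite_poset_trans:
  "finite_poset P le \<Longrightarrow> x \<in> P \<Longrightarrow> y \<in> P \<Longrightarrow> z \<in> P \<Longrightarrow> le x y \<Longrightarrow> le y z \<Longrightarrow> le x z"
  unfolding finite_poset_def by (elim conjE) blast

lemma finite_poset_subset: "finite_poset P le \<Longrightarrow> S \<subseteq> P \<Longrightarrow> finite_poset S le"
  unfolding finite_poset_def by (meson finite_subset subsetD)

lemma finite_poset_converse: "finite_poset P le \<Longrightarrow> finite_poset P (\<lambda>x y. le y x)"
  unfolding finite_poset_def by blast

lemma zeta_subset: "S \<subseteq> P \<Longrightarrow> x \<in> S \<Longrightarrow> y \<in> S \<Longrightarrow> zeta S le x y = zeta P le x y"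
  unfolding zeta_def by auto

lemma finite_poset_has_maximal:
  assumes "finite_poset P le" "P \<noteq> {}"
  obtains t where "t \<in> P" "\<And>y. y \<in> P \<Longrightarrow> le t y \<Longrightarrow> y = t"
proof -
  have "asymp_on P (\<lambda>x y. le x y \<and> x \<noteq> y)"
    using assms(1) unfolding finite_poset_def asymp_on_def by blast
  moreover have "transp_on P (\<lambda>x y. le x y \<and> x \<noteq> y)"
    using assms(1) unfolding finite_poset_def transp_on_def by blast
  ultimately obtain t where "t \<in> P" "\<forall>y\<in>P. le t y \<and> t \<noteq> y \<longrightarrow> \<not> True"
    using Finite_Set.bex_max_element_with_property[of P _ "\<lambda>_. True"] finite_poset_finite[OF assms(1)] assms(2)
    by blast
  then show ?thesis using that by blast
qed

text \<open>Removing a maximal element t, the new row of the inverse is the unit vector at t and the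
  new column is fixed by the equations for y = t.\<close>
lemma zeta_left_inverse_exists:
  assumes "finite_poset P le"
  shows "\<exists>m. right_inverse_on P m (zeta P le) \<and> (\<forall>x y. m x y \<noteq> 0 \<longrightarrow> x \<in> P \<and> y \<in> P \<and> le x y)"
  using finite_poset_finite[OF assms] assms
proof (induction P rule: finite_remove_induct)
  case empty
  show ?case by (rule exI[of _ "\<lambda>_ _. 0"]) (simp add: right_inverse_on_def)
next
  case (remove A)
  obtain t where tA: "t \<in> A" and tmax: "\<And>y. y \<in> A \<Longrightarrow> le t y \<Longrightarrow> y = t"
    using finite_poset_has_maximal[OF remove.prems remove(2)] by blast
  define A' where "A' = A - {t}"
  obtain m' where inv': "right_inverse_on A' m' (zeta A' le)"
    and supp': "\<forall>x y. m' x y \<noteq> 0 \<longrightarrow> x \<in> A' \<and> y \<in> A' \<and> le x y"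
    using remove.IH[OF tA finite_poset_subset[OF remove.prems]] unfolding A'_def by blast
  have finA': "finite A'" and A: "A = insert t A'" and tA': "t \<notin> A'"
    using remove(1) tA unfolding A'_def by auto
  note refl = finite_poset_refl[OF remove.prems tA] and trans = finite_poset_trans[OF remove.prems]
  define c where "c x = (\<Sum>z\<in>A'. m' x z * zeta A le z t)" for x
  define m where "m x y = (if y = t then (if x = t then 1 else - c x) else m' x y)" for x y
  have m't: "m' t z = 0" for z using supp' tA' by blast
  have ct: "c t = 0" unfolding c_def by (simp add: m't)
  have inv: "(\<Sum>z\<in>A. m x z * zeta A le z y) = (if x = y then 1 else 0)"
    if "x \<in> A" "y \<in> A" for x y
  proof (cases "y = t")
    case True
    have "(\<Sum>z\<in>A'. m x z * zeta A le z t) = c x"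
      unfolding c_def m_def using tA' by (intro sum.cong) auto
    moreover have "zeta A le t t = 1" using refl tA unfolding zeta_def by simp
    ultimately have "(\<Sum>z\<in>A. m x z * zeta A le z y) = m x t + c x"
      using True finA' tA' unfolding A by simp
    then show ?thesis using True ct unfolding m_def by simp
  next
    case False
    then have yA': "y \<in> A'" using that unfolding A by simp
    have "zeta A le t y = 0" using tmax[of y] False that unfolding zeta_def by auto
    moreover have "(\<Sum>z\<in>A'. m x z * zeta A le z y) = (\<Sum>z\<in>A'. m' x z * zeta A' le z y)"
      using False tA' zeta_subset[OF subset_insertI _ yA'] unfolding m_def A by (intro sum.cong) auto
    ultimately have "(\<Sum>z\<in>A. m x z * zeta A le z y) = (\<Sum>z\<in>A'. m' x z * zeta A' le z y)"
      using finA' tA' unfolding A by simp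
    also have "\<dots> = (if x = y then 1 else 0)"
      using inv' m't yA' that False unfolding A right_inverse_on_def by auto
    finally show ?thesis .
  qed
  have supp: "x \<in> A \<and> y \<in> A \<and> le x y" if nz: "m x y \<noteq> 0" for x y
  proof (cases "y = t \<and> x \<noteq> t")
    case True
    then have "c x \<noteq> 0" using nz unfolding m_def by simp
    then obtain z where z: "z \<in> A'" "m' x z * zeta A le z t \<noteq> 0"
      unfolding c_def by (rule sum.not_neutral_contains_not_neutral)
    then have "x \<in> A'" "le x z" "le z t" using supp' unfolding zeta_def by (auto split: if_splits)
    then show ?thesis using True z(1) trans[of x z t] tA unfolding A by blast
  next
    case False
    then show ?thesis
      using nz supp' refl tA unfolding m_def A by (auto split: if_splits)
  qed
  show ?case
    using inv supp unfolding right_inverse_on_def by (intro exI[of _ m]) blast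
qed

text \<open>A right inverse is the transpose of a left inverse for the opposite order, and a left and a
  right inverse always coincide.\<close>
lemma zeta_inverse_exists:
  assumes "finite_poset P le"
  obtains m where "right_inverse_on P (zeta P le) m" and "right_inverse_on P m (zeta P le)"
    and "\<And>x y. m x y \<noteq> 0 \<Longrightarrow> x \<in> P \<and> y \<in> P \<and> le x y"
proof -
  obtain l where l: "right_inverse_on P l (zeta P le)"
    and supp: "\<forall>x y. l x y \<noteq> 0 \<longrightarrow> x \<in> P \<and> y \<in> P \<and> le x y"
    using zeta_left_inverse_exists[OF assms] by blast
  obtain d where d: "right_inverse_on P d (zeta P (\<lambda>x y. le y x))"
    using zeta_left_inverse_exists[OF finite_poset_converse[OF assms]] by blast
  have r: "right_inverse_on P (zeta P le) (\<lambda>x y. d y x)"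
    unfolding right_inverse_on_def
  proof (intro ballI)
    fix x y assume "x \<in> P" "y \<in> P"
    then have "(\<Sum>z\<in>P. d y z * zeta P (\<lambda>x y. le y x) z x) = (if y = x then 1 else 0)"
      using d unfolding right_inverse_on_def by blast
    then show "(\<Sum>z\<in>P. zeta P le x z * d y z) = (if x = y then 1 else 0)"
      unfolding zeta_def by (simp add: mult.commute eq_commute conj_commute)
  qed
  have "l x y = d y x" if "x \<in> P" "y \<in> P" for x y
    using left_right_inverse_eq[OF finite_poset_finite[OF assms] l r that] .
  with r have "right_inverse_on P (zeta P le) l"
    unfolding right_inverse_on_def by (simp cong: sum.cong)
  with l supp that show ?thesis by blast
qed

lemma
  assumes "finite_poset P le"
  shows zeta_inv_right_inverse: "right_inverse_on P (zeta P le) (zeta_inv P le)"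
    and zeta_inv_left_inverse: "right_inverse_on P (zeta_inv P le) (zeta P le)"
    and zeta_inv_nonzero: "zeta_inv P le x y \<noteq> 0 \<Longrightarrow> x \<in> P \<and> y \<in> P \<and> le x y"
proof -
  obtain m where r: "right_inverse_on P (zeta P le) m" and l: "right_inverse_on P m (zeta P le)"
    and supp: "\<And>x y. m x y \<noteq> 0 \<Longrightarrow> x \<in> P \<and> y \<in> P \<and> le x y"
    using zeta_inverse_exists[OF assms] by blast
  have "zeta_inv P le = m"
    unfolding zeta_inv_def right_inverse_on_def[symmetric]
  proof (rule the_equality)
    show "right_inverse_on P (zeta P le) m \<and> right_inverse_on P m (zeta P le)
      \<and> (\<forall>x y. x \<notin> P \<or> y \<notin> P \<longrightarrow> m x y = 0)"
      using r l supp by blast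
  next
    fix m' assume m': "right_inverse_on P (zeta P le) m' \<and> right_inverse_on P m' (zeta P le)
      \<and> (\<forall>x y. x \<notin> P \<or> y \<notin> P \<longrightarrow> m' x y = 0)"
    have "m' x y = m x y" for x y
      using left_right_inverse_eq[OF finite_poset_finite[OF assms] l, of m' x y] m' supp by metis
    then show "m' = m" by blast
  qed
  with r l supp show "right_inverse_on P (zeta P le) (zeta_inv P le)"
    "right_inverse_on P (zeta_inv P le) (zeta P le)"
    "zeta_inv P le x y \<noteq> 0 \<Longrightarrow> x \<in> P \<and> y \<in> P \<and> le x y" by simp_all
qed

lemma is_filterD: "is_filter P le S \<Longrightarrow> x \<in> S \<Longrightarrow> y \<in> P \<Longrightarrow> le x y \<Longrightarrow> y \<in> S"
  unfolding is_filter_def by blast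

text \<open>Restricted to a filter S, the Moebius function of P is still a right inverse of the zeta
  function, as every z above a point of S lies in S.\<close>
lemma zeta_inv_filter:
  assumes P: "finite_poset P le" and S: "is_filter P le S" and "x \<in> S" "y \<in> S"
  shows "zeta_inv S le x y = zeta_inv P le x y"
proof -
  have SP: "S \<subseteq> P" using S unfolding is_filter_def by simp
  have PS: "finite_poset S le" using finite_poset_subset[OF P SP] .
  have "right_inverse_on S (zeta S le) (zeta_inv P le)"
    unfolding right_inverse_on_def
  proof (intro ballI)
    fix u v assume uv: "u \<in> S" "v \<in> S"
    have "(\<Sum>z\<in>S. zeta S le u z * zeta_inv P le z v) = (\<Sum>z\<in>P. zeta P le u z * zeta_inv P le z v)"
      using finite_poset_finite[OF P] SP zeta_subset[OF SP uv(1)] is_filterD[OF S uv(1)]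
      by (intro sum.mono_neutral_cong_left) (auto simp: zeta_def)
    then show "(\<Sum>z\<in>S. zeta S le u z * zeta_inv P le z v) = (if u = v then 1 else 0)"
      using zeta_inv_right_inverse[OF P] uv SP unfolding right_inverse_on_def by (simp add: subsetD)
  qed
  then show ?thesis
    using left_right_inverse_eq[OF finite_poset_finite[OF PS] zeta_inv_left_inverse[OF PS]] assms(3,4)
    by blast
qed

text \<open>Leinster's weighting of the poset: the solution of \<open>\<zeta> w = 1\<close>.\<close>
definition weighting :: "'a set \<Rightarrow> ('a \<Rightarrow> 'a \<Rightarrow> bool) \<Rightarrow> 'a \<Rightarrow> int" where
  "weighting P le x = (\<Sum>y\<in>P. zeta_inv P le x y)"

lemma euler_char_filter:
  assumes P: "finite_poset P le" and S: "is_filter P le S"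
  shows "euler_char S le = (\<Sum>x\<in>S. weighting P le x)"
  unfolding euler_char_def weighting_def
proof (rule sum.cong[OF refl])
  fix x assume x: "x \<in> S"
  have SP: "S \<subseteq> P" using S unfolding is_filter_def by simp
  have "(\<Sum>y\<in>S. zeta_inv S le x y) = (\<Sum>y\<in>S. zeta_inv P le x y)"
    using zeta_inv_filter[OF P S x] by simp
  also have "\<dots> = (\<Sum>y\<in>P. zeta_inv P le x y)"
    using finite_poset_finite[OF P] SP zeta_inv_nonzero[OF P] is_filterD[OF S x]
    by (intro sum.mono_neutral_left) auto
  finally show "(\<Sum>y\<in>S. zeta_inv S le x y) = (\<Sum>y\<in>P. zeta_inv P le x y)" .
qed

lemma weighting_unique:
  assumes P: "finite_poset P le" and w: "\<And>q. q \<in> P \<Longrightarrow> (\<Sum>x\<in>P. zeta P le q x * w x) = 1"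
    and p: "p \<in> P"
  shows "w p = weighting P le p"
proof -
  have "w p = (\<Sum>x\<in>P. (if p = x then 1 else 0) * w x)"
    using finite_poset_finite[OF P] p by (simp add: if_distrib[where f="\<lambda>c. c * _"] cong: if_cong)
  also have "\<dots> = (\<Sum>x\<in>P. (\<Sum>q\<in>P. zeta_inv P le p q * zeta P le q x) * w x)"
    using zeta_inv_left_inverse[OF P] p unfolding right_inverse_on_def by (intro sum.cong) auto
  also have "\<dots> = (\<Sum>q\<in>P. zeta_inv P le p q * (\<Sum>x\<in>P. zeta P le q x * w x))"
    by (simp only: sum_distrib_left sum_distrib_right mult.assoc) (rule sum.swap)
  also have "\<dots> = weighting P le p"
    unfolding weighting_def using w by simp
  finally show ?thesis .
qed

lemma sum_list_concat_map:
  "sum_list (map F (concat (map G xs))) = sum_list (map (\<lambda>x. sum_list (map F (G x))) xs)"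
  by (induction xs) auto

lemma filter_rep_exists:
  assumes P: "finite_poset P le"
  shows "\<exists>rep. filter_rep P le g rep"
proof -
  obtain xs where xs: "set xs = P" "distinct xs"
    using finite_distinct_list[OF finite_poset_finite[OF P]] by blast
  define U where "U x = {y \<in> P. le x y}" for x
  define rep where "rep = concat (map (\<lambda>x. [(g x, U x), (- g x, U x - {x})]) xs)"
  have "is_filter P le (U x)" "is_filter P le (U x - {x})" if "x \<in> P" for x
    unfolding is_filter_def U_def
    using finite_poset_trans[OF P] finite_poset_antisym[OF P] that by blast+
  then have filters: "\<forall>(a, S)\<in>set rep. is_filter P le S"
    unfolding rep_def using xs by auto
  have "(\<Sum>(a, S)\<leftarrow>rep. a * (if y \<in> S then 1 else 0)) = g y" if y: "y \<in> P" for y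
  proof -
    have "(\<Sum>(a, S)\<leftarrow>rep. a * (if y \<in> S then 1 else 0)) = (\<Sum>x\<leftarrow>xs. if x = y then g y else 0)"
      unfolding rep_def sum_list_concat_map
      using finite_poset_refl[OF P y] xs(1) y
      by (intro arg_cong[where f = sum_list] map_cong) (auto simp: U_def)
    also have "\<dots> = g y"
      using finite_poset_finite[OF P] y xs by (simp add: sum_list_distinct_conv_sum_set)
    finally show ?thesis .
  qed
  with filters show ?thesis unfolding filter_rep_def by auto
qed

lemma euler_char_filter_indicator:
  assumes P: "finite_poset P le" and S: "is_filter P le S"
  shows "euler_char S le = (\<Sum>x\<in>P. (if x \<in> S then 1 else 0) * weighting P le x)"
proof -
  have "P \<inter> S = S" using S unfolding is_filter_def by blast
  then show ?thesis
    using euler_char_filter[OF P S] sum.inter_restrict[OF finite_poset_finite[OF P], of _ S]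
    by (simp add: if_distrib[where f="\<lambda>c. c * _"] cong: if_cong)
qed

lemma sum_list_euler_char_filters:
  assumes P: "finite_poset P le" and "\<forall>(a, S)\<in>set rep. is_filter P le S"
  shows "(\<Sum>(a, S)\<leftarrow>rep. a * euler_char S le)
       = (\<Sum>x\<in>P. (\<Sum>(a, S)\<leftarrow>rep. a * (if x \<in> S then 1 else 0)) * weighting P le x)"
  using assms(2)
proof (induction rep)
  case (Cons r rep)
  obtain a S where r: "r = (a, S)" by fastforce
  with Cons show ?case
    using euler_char_filter_indicator[OF P, of S]
    by (simp add: distrib_right sum.distrib sum_distrib_left mult.assoc)
qed simp

lemma euler_integral_weighting:
  assumes P: "finite_poset P le"
  shows "euler_integral P le g = (\<Sum>x\<in>P. g x * weighting P le x)"
proof -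
  have rep_value: "(\<Sum>(a, S)\<leftarrow>rep. a * euler_char S le) = (\<Sum>x\<in>P. g x * weighting P le x)"
    if "filter_rep P le g rep" for rep
    using that sum_list_euler_char_filters[OF P, of rep] unfolding filter_rep_def
    by (simp cong: sum.cong)
  show ?thesis
    unfolding euler_integral_def
    using filter_rep_exists[OF P, of g] rep_value by (intro the_equality) auto
qed

lemma weighting_pushforward:
  assumes P: "finite_poset P leP" and Q: "finite_poset Q leQ"
    and f: "chi_distinguished P leP Q leQ f" and q: "q \<in> Q"
  shows "weighting Q leQ q = (\<Sum>p | p \<in> P \<and> f p = q. weighting P leP p)"
proof (rule weighting_unique[OF Q _ q, symmetric])
  fix r assume r: "r \<in> Q"
  have fPQ: "f ` P \<subseteq> Q" and mono: "\<And>x y. x \<in> P \<Longrightarrow> y \<in> P \<Longrightarrow> leP x y \<Longrightarrow> leQ (f x) (f y)"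
    and chi: "euler_char {p \<in> P. leQ r (f p)} leP = 1"
    using f r unfolding chi_distinguished_def order_preserving_def by auto
  define F where "F = {p \<in> P. leQ r (f p)}"
  have F: "is_filter P leP F"
    unfolding is_filter_def F_def using finite_poset_trans[OF Q r] mono fPQ by blast
  have "(\<Sum>x\<in>Q. zeta Q leQ r x * (\<Sum>p | p \<in> P \<and> f p = x. weighting P leP p))
      = (\<Sum>x\<in>Q. \<Sum>p | p \<in> P \<and> f p = x. zeta Q leQ r (f p) * weighting P leP p)"
    by (simp add: sum_distrib_left)
  also have "\<dots> = (\<Sum>p\<in>P. zeta Q leQ r (f p) * weighting P leP p)"
    using sum.group[OF finite_poset_finite[OF P] finite_poset_finite[OF Q] fPQ] .
  also have "\<dots> = (\<Sum>p\<in>F. weighting P leP p)"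
    using finite_poset_finite[OF P] r fPQ unfolding F_def zeta_def
    by (simp add: sum.inter_filter[symmetric] if_distrib[where f="\<lambda>c. c * _"] image_subset_iff cong: if_cong)
  also have "\<dots> = 1"
    using euler_char_filter[OF P F] chi unfolding F_def by simp
  finally show "(\<Sum>x\<in>Q. zeta Q leQ r x * (\<Sum>p | p \<in> P \<and> f p = x. weighting P leP p)) = 1" .
qed

theorem theorem4p10:
  fixes P :: "'a set" and leP :: "'a \<Rightarrow> 'a \<Rightarrow> bool"
    and Q :: "'b set" and leQ :: "'b \<Rightarrow> 'b \<Rightarrow> bool"
    and f :: "'a \<Rightarrow> 'b" and h :: "'b \<Rightarrow> int"
  assumes "finite_poset P leP" and "finite_poset Q leQ"
    and "chi_distinguished P leP Q leQ f"
  shows "euler_integral Q leQ h = euler_integral P leP (h \<circ> f)"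
proof -
  have fPQ: "f ` P \<subseteq> Q"
    using assms(3) unfolding chi_distinguished_def order_preserving_def by simp
  have "euler_integral Q leQ h = (\<Sum>q\<in>Q. h q * weighting Q leQ q)"
    by (rule euler_integral_weighting[OF assms(2)])
  also have "\<dots> = (\<Sum>q\<in>Q. \<Sum>p | p \<in> P \<and> f p = q. h (f p) * weighting P leP p)"
    using weighting_pushforward[OF assms] by (simp add: sum_distrib_left)
  also have "\<dots> = (\<Sum>p\<in>P. h (f p) * weighting P leP p)"
    using sum.group[OF finite_poset_finite[OF assms(1)] finite_poset_finite[OF assms(2)] fPQ] .
  also have "\<dots> = euler_integral P leP (h \<circ> f)"
    using euler_integral_weighting[OF assms(1)] by simp
  finally show ?thesis .
qed

end
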